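(* Let $L$ be a relational language, let $\mathcal F$ be a set of finite irreducible $L$-structures, and let $\mathbf H$ be a countable $\mathcal F$-free $L$-structure (with vertex set $\omega$) universal for all countable $\mathcal F$-free $L$-structures. Assume that there are $\mathcal F$-free $L$-structures $\mathbf B$ and $\mathbf U$, each consisting of one vertex, and infinitely many pairwise non-isomorphic $\mathcal F$-free two-vertex $L$-structures $\mathbf C_0,\mathbf C_1,\dots$ such that in each $\mathbf C_i$ the first vertex induces a copy of $\mathbf B$ and the second (last) vertex induces a copy of $\mathbf U$. Then there exist an $\mathcal F$-free $L$-structure $\mathbf A$ on three vertices and a colouring $c:\binom{\mathbf H}{\mathbf A}\to\omega$ such that for every tree-like embedding $f:\mathbf H\to\mathbf H$, $c$ attains every value in $\omega$ on the set of embeddings $\mathbf A\to\mathbf H$ whose image lies in $f[\omega]$.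
   Context: Convention: every structure is countable, has vertex set some $n\in\omega$ or $\omega$ ordered naturally, embeddings are monotone (order-preserving) embeddings of $L$-structures, isomorphisms likewise respect the order; $\binom{\mathbf H}{\mathbf A}$ is the set of such embeddings $\mathbf A\to\mathbf H$. $\mathbf A$ is $\mathcal F$-free if no member of $\mathcal F$ embeds into it; universal for a class if every member of the class embeds into it. The Gaifman graph of a structure $\mathbf A$ joins distinct $x,y$ iff some tuple in some relation of $\mathbf A$ contains both; $\mathbf A$ is irreducible if its Gaifman graph is complete. For $X\subseteq\omega$, $\mathrm{tp}_{\mathbf H}(X)$ is the isomorphism type (respecting the order) of the substructure of $\mathbf H$ induced on $X$. An embedding $f:\mathbf H\to\mathbf H$ is tree-like if for every finite $X=\{x_0<\dots<x_m\}\subseteq\omega$, every $0\le i\le m$ and every $x\in\omega$ with $x>x_m$ there is $y>x_m$ such that $\mathrm{tp}_{\mathbf H}(f[X]\cup\{f(y)\})=\mathrm{tp}_{\mathbf H}(X\cup\{x\})$ and $\mathrm{tp}_{\mathbf H}(\{0,\dots,f(x_0)-1,f(y)\})=\mathrm{tp}_{\mathbf H}(\{0,\dots,f(x_0)-1,f(x_i)\})$. *)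

theory Defs
  imports "HOL-Library.FuncSet"
begin

text \<open>A relational language is a type of relation symbols 'r together with an
arity function ar.\<close>

record 'r lstr =
  dom :: "nat set"
  rel :: "'r \<Rightarrow> nat list set"

definition wf_str :: "('r \<Rightarrow> nat) \<Rightarrow> 'r lstr \<Rightarrow> bool" where
  "wf_str ar A \<longleftrightarrow> ((\<exists>n. dom A = {..<n}) \<or> dom A = UNIV) \<and>
     (\<forall>r t. t \<in> rel A r \<longrightarrow> length t = ar r \<and> set t \<subseteq> dom A)"

definition is_emb :: "'r lstr \<Rightarrow> 'r lstr \<Rightarrow> (nat \<Rightarrow> nat) \<Rightarrow> bool" where
  "is_emb A B e \<longleftrightarrow> e ` dom A \<subseteq> dom B \<and> strict_mono_on (dom A) e \<and>
     (\<forall>r t. set t \<subseteq> dom A \<longrightarrow> (t \<in> rel A r \<longleftrightarrow> map e t \<in> rel B r))"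

definition Emb :: "'r lstr \<Rightarrow> 'r lstr \<Rightarrow> (nat \<Rightarrow> nat) set" where
  "Emb A B = {e. is_emb A B e \<and> e \<in> extensional (dom A)}"

definition embeds :: "'r lstr \<Rightarrow> 'r lstr \<Rightarrow> bool" where
  "embeds A B \<longleftrightarrow> (\<exists>e. is_emb A B e)"

definition iso :: "'r lstr \<Rightarrow> 'r lstr \<Rightarrow> bool" where
  "iso A B \<longleftrightarrow> (\<exists>e. is_emb A B e \<and> e ` dom A = dom B)"

definition F_free :: "'r lstr set \<Rightarrow> 'r lstr \<Rightarrow> bool" where
  "F_free F A \<longleftrightarrow> (\<forall>X\<in>F. \<not> embeds X A)"

definition irreducible_str :: "'r lstr \<Rightarrow> bool" where
  "irreducible_str A \<longleftrightarrow> (\<forall>x\<in>dom A. \<forall>y\<in>dom A. x \<noteq> y \<longrightarrow>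
     (\<exists>r t. t \<in> rel A r \<and> x \<in> set t \<and> y \<in> set t))"

definition same_tp :: "'r lstr \<Rightarrow> nat set \<Rightarrow> nat set \<Rightarrow> bool" where
  "same_tp H X Y \<longleftrightarrow> (\<exists>g. bij_betw g X Y \<and> strict_mono_on X g \<and>
     (\<forall>r t. set t \<subseteq> X \<longrightarrow> (t \<in> rel H r \<longleftrightarrow> map g t \<in> rel H r)))"

definition tree_like :: "'r lstr \<Rightarrow> (nat \<Rightarrow> nat) \<Rightarrow> bool" where
  "tree_like H f \<longleftrightarrow> is_emb H H f \<and>
     (\<forall>X. finite X \<and> X \<noteq> {} \<longrightarrow>
       (\<forall>xi\<in>X. \<forall>x. x > Max X \<longrightarrow>
          (\<exists>y. y > Max X \<and>
             same_tp H (f ` X \<union> {f y}) (X \<union> {x}) \<and>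
             same_tp H ({..<f (Min X)} \<union> {f y}) ({..<f (Min X)} \<union> {f xi}))))"

end

theory Submission
  imports Defs
begin

text \<open>
  Let A consist of three independent copies of U. A copy of A with vertices e0 < e1 < e2 is
  coloured by looking at the least vertex w < e1 over which e2 and e1 have different types: the
  colour is the index i such that the pair (w, e1) induces C_i.

  Given a tree-like f and a colour k, embed into H the free amalgam of C_k and C_(k+1) over their
  common copy of B, together with an isolated copy of U. Its vertices a < c < b < x satisfy
  {a, b} = C_k, {a, x} = C_(k+1), and c, b, x form a copy of A; the amalgam is F-free because
  the members of F are irreducible and therefore embed into a single block. Tree-likeness gives
  y such that f a, f c, f b, f y have the type of a, c, b, x, while f y and f b have the same
  type over every vertex below f a. Hence f a is the least vertex separating f y from f b, and
  the copy f c, f b, f y of A inside the image of f has colour k.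
\<close>

lemma is_emb_rel_iff:
  "is_emb A B e \<Longrightarrow> set t \<subseteq> dom A \<Longrightarrow> t \<in> rel A r \<longleftrightarrow> map e t \<in> rel B r"
  by (auto simp: is_emb_def)

lemma is_emb_cong:
  assumes "\<And>z. z \<in> dom A \<Longrightarrow> e z = e' z"
  shows "is_emb A B e \<longleftrightarrow> is_emb A B e'"
proof -
  have "map e t = map e' t" if "set t \<subseteq> dom A" for t
    using that assms by (auto intro: map_cong)
  moreover have "e ` dom A = e' ` dom A" using assms by (rule image_cong[OF refl])
  moreover have "strict_mono_on (dom A) e \<longleftrightarrow> strict_mono_on (dom A) e'"
    using assms by (auto simp: strict_mono_on_def)
  ultimately show ?thesis unfolding is_emb_def by metis
qed

lemma is_emb_comp_on:
  assumes e: "is_emb A B e" and img: "e ` dom A \<subseteq> S"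
    and \<sigma>: "strict_mono_on S \<sigma>" "\<sigma> ` S \<subseteq> dom C"
    and rel: "\<And>r t. set t \<subseteq> S \<Longrightarrow> t \<in> rel B r \<longleftrightarrow> map \<sigma> t \<in> rel C r"
  shows "is_emb A C (\<sigma> \<circ> e)"
  unfolding is_emb_def
proof (intro conjI allI impI)
  show "(\<sigma> \<circ> e) ` dom A \<subseteq> dom C" using img \<sigma>(2) by auto
  show "strict_mono_on (dom A) (\<sigma> \<circ> e)"
    using monotone_on_o[OF \<sigma>(1) _ img] e by (simp add: is_emb_def)
  fix r t assume t: "set t \<subseteq> dom A"
  then have "set (map e t) \<subseteq> S" using img by auto
  then show "t \<in> rel A r \<longleftrightarrow> map (\<sigma> \<circ> e) t \<in> rel C r"
    using is_emb_rel_iff[OF e t] rel[of "map e t"] by simp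
qed

lemma is_emb_comp:
  assumes "is_emb A B e" "is_emb B C e'"
  shows "is_emb A C (e' \<circ> e)"
  using assms by (intro is_emb_comp_on[where S = "dom B"]) (auto simp: is_emb_def)

lemma F_free_is_emb:
  assumes "F_free F B" "is_emb A B e"
  shows "F_free F A"
  using assms is_emb_comp unfolding F_free_def embeds_def by blast

lemma is_emb_same_map_iso:
  assumes "is_emb A C e" "is_emb B C e" "dom A = dom B"
  shows "iso A B"
proof -
  have "is_emb A B id"
    using assms by (auto simp: is_emb_def strict_mono_on_def)
  then show ?thesis using assms(3) unfolding iso_def by auto
qed

lemma irreducible_is_emb_adjacent:
  assumes "is_emb A B e" "wf_str ar A" "irreducible_str A"
    and "x \<in> dom A" "y \<in> dom A" "x \<noteq> y"
  obtains r t where "t \<in> rel B r" "e x \<in> set t" "e y \<in> set t"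
proof -
  obtain r t where t: "t \<in> rel A r" "x \<in> set t" "y \<in> set t"
    using assms(3-6) unfolding irreducible_str_def by blast
  have "set t \<subseteq> dom A" using assms(2) t(1) unfolding wf_str_def by blast
  then have "map e t \<in> rel B r" using is_emb_rel_iff[OF assms(1)] t(1) by blast
  then show ?thesis using that t(2,3) by auto
qed

lemma is_emb_comp_nth:
  assumes "is_emb X Y ((!) ps)" "is_emb Y Z e" "dom X = {..<length ps}"
  shows "is_emb X Z ((!) (map e ps))"
  using is_emb_comp[OF assms(1,2)] is_emb_cong[of X "e \<circ> (!) ps" "(!) (map e ps)"] assms(3)
  by simp

lemma is_emb_point_rel_iff:
  assumes "is_emb B Y e" "dom B = {..<1}" "set t \<subseteq> {0}"
  shows "t \<in> rel B r \<longleftrightarrow> map (\<lambda>_. e 0) t \<in> rel Y r"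
proof -
  have "map e t = map (\<lambda>_. e 0) t" using assms(3) by (induction t) auto
  moreover have "set t \<subseteq> dom B" using assms(2,3) by auto
  ultimately show ?thesis using is_emb_rel_iff[OF assms(1)] by metis
qed

section \<open>Order types\<close>

lemma sorted_strict_mono_bij_map:
  fixes h :: "'a::linorder \<Rightarrow> 'b::linorder"
  assumes "sorted_wrt (<) ps" "sorted_wrt (<) qs"
    and "bij_betw h (set ps) (set qs)" "strict_mono_on (set ps) h"
  shows "map h ps = qs"
  using assms
proof (induction ps arbitrary: qs)
  case Nil
  then show ?case by (simp add: bij_betw_def)
next
  case (Cons p ps)
  then obtain q qs' where qs: "qs = q # qs'"
    by (cases qs) (auto simp: bij_betw_def)
  have "q \<in> h ` set (p # ps)" using Cons.prems(3) qs by (simp add: bij_betw_def)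
  then obtain s where s: "s \<in> set (p # ps)" "q = h s" by blast
  have "p \<le> s" using s(1) Cons.prems(1) by auto
  then have "h p \<le> q"
    using s strict_mono_on_less_eq[OF Cons.prems(4)] by simp
  moreover have "q \<le> h p"
  proof -
    have "h p \<in> set qs" using Cons.prems(3) by (auto simp: bij_betw_def)
    then show ?thesis using Cons.prems(2) qs by (auto simp: less_imp_le)
  qed
  ultimately have hp: "h p = q" by simp
  have "bij_betw h (set ps) (set qs')"
  proof -
    have "bij_betw h (set (p # ps) - {p}) (set qs - {h p})"
      using Cons.prems(3) by (rule bij_betw_DiffI) (auto simp: bij_betw_def qs hp)
    moreover have "set (p # ps) - {p} = set ps" "set qs - {h p} = set qs'"
      using Cons.prems(1,2) qs hp by auto
    ultimately show ?thesis by simp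
  qed
  moreover have "strict_mono_on (set ps) h"
    using Cons.prems(4) by (rule monotone_on_subset) auto
  ultimately have "map h ps = qs'"
    using Cons.IH Cons.prems(1,2) qs by simp
  then show ?case using hp qs by simp
qed

lemma sorted_wrt_less_strict_mono_on_nth:
  "sorted_wrt (<) xs \<Longrightarrow> strict_mono_on {..<length xs} ((!) xs)"
  by (auto intro: strict_mono_onI sorted_wrt_nth_less)

lemma is_emb_nth_retraction:
  assumes Y: "dom Y = {..<length ps}" and ps: "sorted_wrt (<) ps" "set ps \<subseteq> S" "S \<subseteq> dom D"
    and retr: "\<And>i. i < length ps \<Longrightarrow> \<rho> (ps ! i) = i"
    and rel: "\<And>r t. set t \<subseteq> S \<Longrightarrow> t \<in> rel D r \<longleftrightarrow> map \<rho> t \<in> rel Y r"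
  shows "is_emb Y D ((!) ps)"
  unfolding is_emb_def
proof (intro conjI allI impI)
  show "(!) ps ` dom Y \<subseteq> dom D" using Y ps(2,3) nth_mem by fastforce
  show "strict_mono_on (dom Y) ((!) ps)"
    using sorted_wrt_less_strict_mono_on_nth[OF ps(1)] Y by simp
  fix r t assume t: "set t \<subseteq> dom Y"
  then have "map \<rho> (map ((!) ps) t) = t"
    using Y retr by (simp add: map_idI subset_iff)
  moreover have "set (map ((!) ps) t) \<subseteq> S"
    using t Y ps(2) nth_mem by fastforce
  ultimately show "t \<in> rel Y r \<longleftrightarrow> map ((!) ps) t \<in> rel D r"
    using rel by metis
qed

lemma is_emb_nth_same_tp_iff:
  assumes H: "dom H = UNIV" and tp: "same_tp H (set ps) (set qs)"
    and sorted: "sorted_wrt (<) ps" "sorted_wrt (<) qs" and len: "length ps = length qs"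
    and idx: "dom A = {..<length is}" "set is \<subseteq> {..<length ps}"
  shows "is_emb A H ((!) (map ((!) ps) is)) \<longleftrightarrow> is_emb A H ((!) (map ((!) qs) is))"
proof -
  obtain h where h: "bij_betw h (set ps) (set qs)" "strict_mono_on (set ps) h"
    and h_rel: "\<And>r t. set t \<subseteq> set ps \<Longrightarrow> t \<in> rel H r \<longleftrightarrow> map h t \<in> rel H r"
    using tp unfolding same_tp_def by blast
  have h_nth: "h (ps ! i) = qs ! i" if "i < length ps" for i
    using sorted_strict_mono_bij_map[OF sorted h] that by (metis nth_map)
  have is_bound: "is ! i < length ps" if "i < length is" for i
    using idx(2) that by (auto simp: subset_iff)
  have "strict_mono_on (dom A) ((!) (map ((!) ps) is)) \<longleftrightarrow> strict_mono_on (dom A) ((!) (map ((!) qs) is))"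
  proof -
    have "ps ! (is ! i) < ps ! (is ! j) \<longleftrightarrow> qs ! (is ! i) < qs ! (is ! j)"
      if "i < length is" "j < length is" for i j
      using that is_bound len
        strict_mono_on_less[OF sorted_wrt_less_strict_mono_on_nth[OF sorted(1)]]
        strict_mono_on_less[OF sorted_wrt_less_strict_mono_on_nth[OF sorted(2)]]
      by auto
    then show ?thesis using idx(1) by (auto simp: strict_mono_on_def)
  qed
  moreover have "map ((!) (map ((!) ps) is)) t \<in> rel H r \<longleftrightarrow> map ((!) (map ((!) qs) is)) t \<in> rel H r"
    if "set t \<subseteq> dom A" for r t
  proof -
    have "map h (map ((!) (map ((!) ps) is)) t) = map ((!) (map ((!) qs) is)) t"
      using that idx(1) is_bound h_nth by auto
    moreover have "set (map ((!) (map ((!) ps) is)) t) \<subseteq> set ps"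
      using that idx(1) is_bound by auto
    ultimately show ?thesis using h_rel by metis
  qed
  ultimately show ?thesis using H by (auto simp: is_emb_def)
qed

lemma same_tp_prefix:
  assumes tp: "same_tp H ({..<m} \<union> {p}) ({..<m} \<union> {q})"
    and "m \<le> p" "m \<le> q" "w < m"
  shows "same_tp H {w, p} {w, q}"
proof -
  obtain g where g: "bij_betw g ({..<m} \<union> {p}) ({..<m} \<union> {q})"
      "strict_mono_on ({..<m} \<union> {p}) g"
    and g_rel: "\<And>r t. set t \<subseteq> {..<m} \<union> {p} \<Longrightarrow> t \<in> rel H r \<longleftrightarrow> map g t \<in> rel H r"
    using tp unfolding same_tp_def by blast
  have "map g ([0..<m] @ [p]) = [0..<m] @ [q]"
    using g assms(2,3) by (intro sorted_strict_mono_bij_map) (auto simp: sorted_wrt_append atLeast0LessThan)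
  then have "g (([0..<m] @ [p]) ! i) = ([0..<m] @ [q]) ! i" if "i \<le> m" for i
    using that by (metis length_append_singleton length_upt less_Suc_eq_le minus_nat.diff_0 nth_map)
  from this[of w] this[of m] have gw: "g w = w" and gp: "g p = q"
    using \<open>w < m\<close> by (simp_all add: nth_append)
  show ?thesis
    unfolding same_tp_def
  proof (intro exI[of _ g] conjI allI impI)
    have "inj_on g {w, p}"
      by (rule inj_on_subset[OF bij_betw_imp_inj_on[OF g(1)]]) (use \<open>w < m\<close> in auto)
    then show "bij_betw g {w, p} {w, q}" using gw gp by (simp add: bij_betw_def)
    show "strict_mono_on {w, p} g"
      by (rule monotone_on_subset[OF g(2)]) (use \<open>w < m\<close> in auto)
    show "t \<in> rel H r \<longleftrightarrow> map g t \<in> rel H r" if "set t \<subseteq> {w, p}" for r t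
      using that \<open>w < m\<close> by (intro g_rel) auto
  qed
qed

lemma tree_like_extend:
  assumes f: "tree_like H f" and H: "dom H = UNIV" and ord: "a < c" "c < b" "b < x"
  obtains y where "f a < f c" "f c < f b" "f b < f y"
    and "\<And>X is. dom X = {..<length is} \<Longrightarrow> set is \<subseteq> {..<4} \<Longrightarrow>
      is_emb X H ((!) (map ((!) [f a, f c, f b, f y]) is)) \<longleftrightarrow> is_emb X H ((!) (map ((!) [a, c, b, x]) is))"
    and "\<And>w. w < f a \<Longrightarrow> same_tp H {w, f y} {w, f b}"
proof -
  have f_mono: "strict_mono f"
    using f H by (simp add: tree_like_def is_emb_def)
  define V where "V = {a, c, b}"
  have V: "finite V" "V \<noteq> {}" "b \<in> V" "Max V = b" "Min V = a"
    using ord by (auto simp: V_def intro: Max_eqI Min_eqI)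
  obtain y where y: "b < y" "same_tp H (f ` V \<union> {f y}) (V \<union> {x})"
      "same_tp H ({..<f a} \<union> {f y}) ({..<f a} \<union> {f b})"
    using f V ord(3) unfolding tree_like_def by metis
  have fy: "f a < f c" "f c < f b" "f b < f y"
    using ord y(1) by (simp_all add: strict_mono_less[OF f_mono])
  have "f ` V \<union> {f y} = set [f a, f c, f b, f y]" "V \<union> {x} = set [a, c, b, x]"
    by (auto simp: V_def)
  with y(2) have tp: "same_tp H (set [f a, f c, f b, f y]) (set [a, c, b, x])" by simp
  show ?thesis
  proof (rule that[OF fy])
    show "is_emb X H ((!) (map ((!) [f a, f c, f b, f y]) is)) \<longleftrightarrow> is_emb X H ((!) (map ((!) [a, c, b, x]) is))"
      if "dom X = {..<length is}" "set is \<subseteq> {..<4}" for X "is"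
      using that fy ord by (intro is_emb_nth_same_tp_iff[OF H tp]) auto
    show "same_tp H {w, f y} {w, f b}" if "w < f a" for w
      using fy that by (intro same_tp_prefix[OF y(3)]) auto
  qed
qed

lemma restrict_nth_Emb:
  assumes "is_emb A H ((!) ps)" "dom A = {..<length ps}"
  shows "restrict ((!) ps) (dom A) \<in> Emb A H"
  using assms is_emb_cong[of A "restrict ((!) ps) (dom A)" "(!) ps"] by (simp add: Emb_def)

section \<open>The colouring\<close>

definition split_vertex :: "'r lstr \<Rightarrow> nat \<Rightarrow> nat \<Rightarrow> nat" where
  "split_vertex H u v = (LEAST w. w < u \<and> \<not> same_tp H {w, v} {w, u})"

text \<open>The value is arbitrary if the pair realises none of the C i.\<close>

definition pair_colour :: "'r lstr \<Rightarrow> (nat \<Rightarrow> 'r lstr) \<Rightarrow> (nat \<Rightarrow> nat) \<Rightarrow> nat" where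
  "pair_colour H C e = (SOME i. is_emb (C i) H ((!) [split_vertex H (e 1) (e 2), e 1]))"

lemma split_vertex_eqI:
  assumes "a < u" "\<not> same_tp H {a, v} {a, u}" "\<And>w. w < a \<Longrightarrow> same_tp H {w, v} {w, u}"
  shows "split_vertex H u v = a"
  unfolding split_vertex_def
  by (rule Least_equality) (use assms in \<open>auto simp flip: not_less\<close>)

lemma pair_colour_eqI:
  assumes C_dom: "\<And>i. dom (C i) = {..<2}"
    and C_noniso: "\<And>i j. i \<noteq> j \<Longrightarrow> \<not> iso (C i) (C j)"
    and emb: "is_emb (C k) H ((!) [split_vertex H (e 1) (e 2), e 1])"
  shows "pair_colour H C e = k"
proof -
  have "is_emb (C (pair_colour H C e)) H ((!) [split_vertex H (e 1) (e 2), e 1])"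
    unfolding pair_colour_def by (rule someI[where P = "\<lambda>i. is_emb (C i) H _", OF emb])
  then have "iso (C (pair_colour H C e)) (C k)"
    by (rule is_emb_same_map_iso[OF _ emb]) (simp add: C_dom)
  then show ?thesis using C_noniso by blast
qed

lemma tree_like_attains_pair_colour:
  fixes H :: "'r lstr"
  assumes f: "tree_like H f" and H: "dom H = UNIV" and A_dom: "dom A = {..<3}"
    and C_dom: "\<And>i. dom (C i) = {..<2}"
    and C_noniso: "\<And>i j. i \<noteq> j \<Longrightarrow> \<not> iso (C i) (C j)"
    and ord: "a < c" "c < b" "b < x"
    and emb: "is_emb (C k) H ((!) [a, b])" "is_emb (C (Suc k)) H ((!) [a, x])"
      "is_emb A H ((!) [c, b, x])"
  shows "\<exists>e\<in>Emb A H. e ` dom A \<subseteq> range f \<and> pair_colour H C e = k"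
proof -
  obtain y where fy: "f a < f c" "f c < f b" "f b < f y"
    and transfer: "\<And>X is. dom X = {..<length is} \<Longrightarrow> set is \<subseteq> {..<4} \<Longrightarrow>
      is_emb X H ((!) (map ((!) [f a, f c, f b, f y]) is)) \<longleftrightarrow> is_emb X H ((!) (map ((!) [a, c, b, x]) is))"
    and below: "\<And>w. w < f a \<Longrightarrow> same_tp H {w, f y} {w, f b}"
    using tree_like_extend[OF f H ord] by blast
  have eA: "is_emb A H ((!) [f c, f b, f y])"
    using transfer[of A "[1, 2, 3]"] emb(3) A_dom by simp
  have Ck: "is_emb (C k) H ((!) [f a, f b])"
    using transfer[of "C k" "[0, 2]"] emb(1) C_dom by simp
  have Ck1: "is_emb (C (Suc k)) H ((!) [f a, f y])"
    using transfer[of "C (Suc k)" "[0, 3]"] emb(2) C_dom by simp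
  have "\<not> same_tp H {f a, f y} {f a, f b}"
  proof
    assume "same_tp H {f a, f y} {f a, f b}"
    then have "is_emb (C (Suc k)) H ((!) [f a, f b])"
      using is_emb_nth_same_tp_iff[OF H, of "[f a, f y]" "[f a, f b]" "C (Suc k)" "[0, 1]"]
        Ck1 C_dom fy by simp
    then have "iso (C (Suc k)) (C k)"
      by (rule is_emb_same_map_iso[OF _ Ck]) (simp add: C_dom)
    then show False using C_noniso by simp
  qed
  then have "split_vertex H (f b) (f y) = f a"
    using fy below by (intro split_vertex_eqI) auto
  moreover define e where "e = restrict ((!) [f c, f b, f y]) (dom A)"
  ultimately have "is_emb (C k) H ((!) [split_vertex H (e 1) (e 2), e 1])"
    using Ck A_dom by (simp add: e_def numeral_2_eq_2)
  then have "pair_colour H C e = k"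
    using pair_colour_eqI[where C = C, OF C_dom C_noniso] by blast
  moreover have "e \<in> Emb A H"
    unfolding e_def using eA A_dom by (intro restrict_nth_Emb) auto
  moreover have "e ` dom A \<subseteq> range f"
    using A_dom by (auto simp: e_def less_Suc_eq numeral_3_eq_3)
  ultimately show ?thesis by blast
qed

section \<open>The free amalgam\<close>

definition indep_copies :: "'r lstr \<Rightarrow> nat \<Rightarrow> 'r lstr" where
  "indep_copies U n =
     \<lparr>dom = {..<n}, rel = (\<lambda>r. {t. \<exists>v<n. set t \<subseteq> {v} \<and> map (\<lambda>_. 0) t \<in> rel U r})\<rparr>"

lemma wf_str_indep_copies:
  assumes "wf_str ar U"
  shows "wf_str ar (indep_copies U n)"
proof -
  have "length t = ar r \<and> set t \<subseteq> {..<n}"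
    if "v < n" "set t \<subseteq> {v}" "map (\<lambda>_. 0::nat) t \<in> rel U r" for r t v
    using assms that unfolding wf_str_def by (metis length_map lessThan_iff singletonD subset_iff)
  then show ?thesis
    unfolding wf_str_def indep_copies_def by auto
qed

text \<open>
  In amalg P Q U, vertex 0 is the common first vertex of P and Q, the second vertices of P and Q
  are 2 and 3, and 1 is an isolated copy of U; block_pos maps each of the blocks {0, 2}, {0, 3}
  and {1} back to the positions in its factor.
\<close>

definition block_pos :: "nat \<Rightarrow> nat" where
  "block_pos z = (if 2 \<le> z then 1 else 0)"

lemma map_block_pos_first: "set t \<subseteq> {0} \<Longrightarrow> map block_pos t = t"
  by (induction t) (auto simp: block_pos_def)

definition amalg :: "'r lstr \<Rightarrow> 'r lstr \<Rightarrow> 'r lstr \<Rightarrow> 'r lstr" where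
  "amalg P Q U =
     \<lparr>dom = {..<4}, rel = (\<lambda>r. {t. set t \<subseteq> {0, 2} \<and> map block_pos t \<in> rel P r
        \<or> set t \<subseteq> {0, 3} \<and> map block_pos t \<in> rel Q r \<or> set t \<subseteq> {1} \<and> map block_pos t \<in> rel U r})\<rparr>"

lemma rel_amalg:
  "t \<in> rel (amalg P Q U) r \<longleftrightarrow> set t \<subseteq> {0, 2} \<and> map block_pos t \<in> rel P r
     \<or> set t \<subseteq> {0, 3} \<and> map block_pos t \<in> rel Q r \<or> set t \<subseteq> {1} \<and> map block_pos t \<in> rel U r"
  by (simp add: amalg_def)

lemma dom_amalg: "dom (amalg P Q U) = {..<4}"
  by (simp add: amalg_def)

lemma wf_str_amalg:
  assumes "wf_str ar P" "wf_str ar Q" "wf_str ar U"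
  shows "wf_str ar (amalg P Q U)"
proof -
  have "length (map block_pos t) = ar r"
    if "map block_pos t \<in> rel P r \<or> map block_pos t \<in> rel Q r \<or> map block_pos t \<in> rel U r" for r t
    using assms that unfolding wf_str_def by blast
  moreover have "{0, 2} \<subseteq> {..<4::nat}" "{0, 3} \<subseteq> {..<4::nat}" "{1} \<subseteq> {..<4::nat}"
    by auto
  ultimately show ?thesis
    unfolding wf_str_def rel_amalg dom_amalg by (metis length_map order_trans)
qed

lemma amalg_clique:
  assumes "S \<subseteq> dom (amalg P Q U)"
    and adj: "\<And>i j. i \<in> S \<Longrightarrow> j \<in> S \<Longrightarrow> i \<noteq> j \<Longrightarrow> \<exists>r t. t \<in> rel (amalg P Q U) r \<and> i \<in> set t \<and> j \<in> set t"
  shows "S \<subseteq> {0, 2} \<or> S \<subseteq> {0, 3} \<or> S \<subseteq> {1}"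
proof -
  have blocks: "{i, j} \<subseteq> {0, 2} \<or> {i, j} \<subseteq> {0, 3} \<or> {i, j} \<subseteq> {1}"
    if "i \<in> S" "j \<in> S" "i \<noteq> j" for i j
    using adj[OF that] unfolding rel_amalg by blast
  show ?thesis
  proof (cases "1 \<in> S")
    case True
    have "j = 1" if "j \<in> S" for j
    proof (rule ccontr)
      assume "j \<noteq> 1"
      then show False using blocks[OF True that] by auto
    qed
    then show ?thesis by blast
  next
    case False
    have "x \<in> {0, 2, 3}" if "x \<in> S" for x
    proof -
      have "x < 4" "x \<noteq> 1" using that assms(1) False by (auto simp: dom_amalg)
      then show ?thesis by auto
    qed
    moreover have "\<not> (2 \<in> S \<and> 3 \<in> S)" using blocks[of 2 3] by auto
    ultimately show ?thesis by blast
  qed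
qed

lemma set_subset_disjoint_Nil: "set t \<subseteq> A \<Longrightarrow> set t \<subseteq> B \<Longrightarrow> A \<inter> B = {} \<Longrightarrow> t = []"
  by (metis Int_greatest set_empty subset_empty)

text \<open>
  P and Q induce the same structure on their first vertex, and their second vertices induce
  copies of U (a tuple over a single vertex is described by its length).
\<close>

locale amalg_compatible =
  fixes P Q U :: "'r lstr"
  assumes dom_P: "dom P = {..<2}" and dom_Q: "dom Q = {..<2}" and dom_U: "dom U = {..<1}"
    and P_Q_first: "\<And>r t. set t \<subseteq> {0} \<Longrightarrow> t \<in> rel P r \<longleftrightarrow> t \<in> rel Q r"
    and P_U_second: "\<And>r t. set t \<subseteq> {0} \<Longrightarrow> map (\<lambda>_. 1) t \<in> rel P r \<longleftrightarrow> t \<in> rel U r"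
    and Q_U_second: "\<And>r t. set t \<subseteq> {0} \<Longrightarrow> map (\<lambda>_. 1) t \<in> rel Q r \<longleftrightarrow> t \<in> rel U r"
begin

abbreviation D :: "'r lstr" where
  "D \<equiv> amalg P Q U"

lemma nil_rel_iff: "[] \<in> rel P r \<longleftrightarrow> [] \<in> rel U r" "[] \<in> rel Q r \<longleftrightarrow> [] \<in> rel U r"
  using P_U_second[of "[]"] Q_U_second[of "[]"] by simp_all

lemma rel_amalg_P: "set t \<subseteq> {0, 2} \<Longrightarrow> t \<in> rel D r \<longleftrightarrow> map block_pos t \<in> rel P r"
proof -
  assume t: "set t \<subseteq> {0, 2}"
  have "map block_pos t \<in> rel Q r \<longleftrightarrow> map block_pos t \<in> rel P r" if "set t \<subseteq> {0, 3}"
  proof -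
    have "set t \<subseteq> {0}" using t that by auto
    then show ?thesis using P_Q_first map_block_pos_first by simp
  qed
  moreover have "set t \<subseteq> {1} \<Longrightarrow> t = []" using set_subset_disjoint_Nil[OF _ t] by auto
  ultimately show ?thesis using t nil_rel_iff unfolding rel_amalg by auto
qed

lemma rel_amalg_Q: "set t \<subseteq> {0, 3} \<Longrightarrow> t \<in> rel D r \<longleftrightarrow> map block_pos t \<in> rel Q r"
proof -
  assume t: "set t \<subseteq> {0, 3}"
  have "map block_pos t \<in> rel P r \<longleftrightarrow> map block_pos t \<in> rel Q r" if "set t \<subseteq> {0, 2}"
  proof -
    have "set t \<subseteq> {0}" using t that by auto
    then show ?thesis using P_Q_first map_block_pos_first by simp
  qed
  moreover have "set t \<subseteq> {1} \<Longrightarrow> t = []" using set_subset_disjoint_Nil[OF _ t] by auto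
  ultimately show ?thesis using t nil_rel_iff unfolding rel_amalg by auto
qed

lemma rel_amalg_U: "set t \<subseteq> {1} \<Longrightarrow> t \<in> rel D r \<longleftrightarrow> map block_pos t \<in> rel U r"
proof -
  assume t: "set t \<subseteq> {1}"
  then have "set t \<subseteq> {0, 2} \<or> set t \<subseteq> {0, 3} \<Longrightarrow> t = []"
    using set_subset_disjoint_Nil[OF t] by auto
  then show ?thesis using t nil_rel_iff unfolding rel_amalg by auto
qed

lemma F_free_amalg:
  assumes F: "\<forall>X\<in>F. wf_str ar X \<and> irreducible_str X"
    and free: "F_free F P" "F_free F Q" "F_free F U"
  shows "F_free F D"
  unfolding F_free_def embeds_def
proof (intro ballI notI, elim exE)
  fix X e assume X: "X \<in> F" and e: "is_emb X D e"
  have no_block_emb: False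
    if "e ` dom X \<subseteq> S" "strict_mono_on S block_pos" "block_pos ` S \<subseteq> dom Y" "F_free F Y"
      and "\<And>r t. set t \<subseteq> S \<Longrightarrow> t \<in> rel D r \<longleftrightarrow> map block_pos t \<in> rel Y r" for S Y
    using is_emb_comp_on[OF e that(1-3)] that(4,5) X unfolding F_free_def embeds_def by blast
  have "e ` dom X \<subseteq> {0, 2} \<or> e ` dom X \<subseteq> {0, 3} \<or> e ` dom X \<subseteq> {1}"
  proof (rule amalg_clique)
    show "e ` dom X \<subseteq> dom D" using e by (simp add: is_emb_def)
    fix i j assume "i \<in> e ` dom X" "j \<in> e ` dom X" "i \<noteq> j"
    then show "\<exists>r t. t \<in> rel D r \<and> i \<in> set t \<and> j \<in> set t"
      using irreducible_is_emb_adjacent[OF e] F X by blast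
  qed
  then show False
  proof (elim disjE)
    assume "e ` dom X \<subseteq> {0, 2}"
    then show False
      by (rule no_block_emb[OF _ _ _ free(1) rel_amalg_P]) (auto simp: strict_mono_on_def block_pos_def dom_P)
  next
    assume "e ` dom X \<subseteq> {0, 3}"
    then show False
      by (rule no_block_emb[OF _ _ _ free(2) rel_amalg_Q]) (auto simp: strict_mono_on_def block_pos_def dom_Q)
  next
    assume "e ` dom X \<subseteq> {1}"
    then show False
      by (rule no_block_emb[OF _ _ _ free(3) rel_amalg_U]) (auto simp: strict_mono_on_def block_pos_def dom_U)
  qed
qed

lemma is_emb_P_amalg: "is_emb P D ((!) [0, 2])"
  using dom_P rel_amalg_P
  by (intro is_emb_nth_retraction[where S = "{0, 2}" and \<rho> = block_pos])
    (auto simp: dom_amalg block_pos_def less_Suc_eq)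

lemma is_emb_Q_amalg: "is_emb Q D ((!) [0, 3])"
  using dom_Q rel_amalg_Q
  by (intro is_emb_nth_retraction[where S = "{0, 3}" and \<rho> = block_pos])
    (auto simp: dom_amalg block_pos_def less_Suc_eq)

lemma rel_amalg_point:
  assumes t: "set t \<subseteq> {v}" and v: "v \<in> {1, 2, 3}"
  shows "t \<in> rel D r \<longleftrightarrow> map (\<lambda>_. 0) t \<in> rel U r"
proof -
  have block_pos: "map block_pos t = map (\<lambda>_. block_pos v) t"
    using t by (induction t) auto
  have zero: "set (map (\<lambda>_. 0::nat) t) \<subseteq> {0}" by auto
  from v consider "v = 1" | "v = 2" | "v = 3" by blast
  then show ?thesis
  proof cases
    case 1
    then show ?thesis using rel_amalg_U[of t r] t unfolding block_pos by (simp add: block_pos_def)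
  next
    case 2
    with t have "set t \<subseteq> {0, 2}" by auto
    from rel_amalg_P[OF this, of r] show ?thesis
      using P_U_second[OF zero, of r] \<open>v = 2\<close> unfolding block_pos
      by (simp add: block_pos_def comp_def)
  next
    case 3
    with t have "set t \<subseteq> {0, 3}" by auto
    from rel_amalg_Q[OF this, of r] show ?thesis
      using Q_U_second[OF zero, of r] \<open>v = 3\<close> unfolding block_pos
      by (simp add: block_pos_def comp_def)
  qed
qed

lemma rel_amalg_indep_copies:
  assumes t: "set t \<subseteq> {1, 2, 3}"
  shows "t \<in> rel D r \<longleftrightarrow> map (\<lambda>z. z - 1) t \<in> rel (indep_copies U 3) r"
proof (cases "\<exists>v. set t \<subseteq> {v}")
  case True
  then obtain v where v: "set t \<subseteq> {v}" "v \<in> {1, 2, 3}"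
    using t by (cases t) auto
  then have "set (map (\<lambda>z. z - 1) t) \<subseteq> {v - 1}" "v - 1 < 3" by auto
  then have "map (\<lambda>z. z - 1) t \<in> rel (indep_copies U 3) r \<longleftrightarrow> map (\<lambda>_. 0) t \<in> rel U r"
    unfolding indep_copies_def by (auto simp: comp_def)
  then show ?thesis using rel_amalg_point[OF v] by simp
next
  case False
  have "t \<notin> rel D r"
  proof
    assume "t \<in> rel D r"
    then have "set t \<subseteq> {0, 2} \<or> set t \<subseteq> {0, 3} \<or> set t \<subseteq> {1}"
      unfolding rel_amalg by blast
    then have "set t \<subseteq> {2} \<or> set t \<subseteq> {3} \<or> set t \<subseteq> {1}" using t by auto
    then show False using False by blast
  qed
  moreover have "map (\<lambda>z. z - 1) t \<notin> rel (indep_copies U 3) r"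
  proof
    assume "map (\<lambda>z. z - 1) t \<in> rel (indep_copies U 3) r"
    then obtain u where u: "set (map (\<lambda>z. z - 1) t) \<subseteq> {u}"
      unfolding indep_copies_def by auto
    have "x = Suc u" if "x \<in> set t" for x
    proof -
      have "x - 1 = u" "1 \<le> x" using that u t by auto
      then show ?thesis by simp
    qed
    then have "set t \<subseteq> {Suc u}" by auto
    then show False using False by blast
  qed
  ultimately show ?thesis by blast
qed

lemma is_emb_indep_copies_amalg: "is_emb (indep_copies U 3) D ((!) [1, 2, 3])"
  using rel_amalg_indep_copies
  by (intro is_emb_nth_retraction[where S = "{1, 2, 3}"]) (auto simp: dom_amalg indep_copies_def less_Suc_eq)

lemma is_emb_amalg_points:
  assumes d: "is_emb D H d"
  shows "d 0 < d 1" "d 1 < d 2" "d 2 < d 3"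
    and "is_emb P H ((!) [d 0, d 2])" "is_emb Q H ((!) [d 0, d 3])"
      "is_emb (indep_copies U 3) H ((!) [d 1, d 2, d 3])"
proof -
  have "strict_mono_on {..<4} d" using d by (simp add: is_emb_def dom_amalg)
  then show "d 0 < d 1" "d 1 < d 2" "d 2 < d 3" by (simp_all add: strict_mono_on_less)
  show "is_emb P H ((!) [d 0, d 2])" "is_emb Q H ((!) [d 0, d 3])"
    "is_emb (indep_copies U 3) H ((!) [d 1, d 2, d 3])"
    using is_emb_comp_nth[OF is_emb_P_amalg d] is_emb_comp_nth[OF is_emb_Q_amalg d]
      is_emb_comp_nth[OF is_emb_indep_copies_amalg d] dom_P dom_Q
    by (simp_all add: indep_copies_def)
qed

end

lemma amalg_compatible_pointed:
  assumes dom: "dom P = {..<2}" "dom Q = {..<2}" "dom B = {..<1}" "dom U = {..<1}"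
    and B: "\<exists>e. is_emb B P e \<and> e 0 = 0" "\<exists>e. is_emb B Q e \<and> e 0 = 0"
    and U: "\<exists>e. is_emb U P e \<and> e 0 = 1" "\<exists>e. is_emb U Q e \<and> e 0 = 1"
  shows "amalg_compatible P Q U"
proof -
  have first: "t \<in> rel Y r \<longleftrightarrow> t \<in> rel B r" if "\<exists>e. is_emb B Y e \<and> e 0 = 0" "set t \<subseteq> {0}"
    for Y :: "'a lstr" and r t
  proof -
    have "map (\<lambda>_. 0) t = t" using that(2) by (induction t) auto
    then show ?thesis using that is_emb_point_rel_iff[OF _ dom(3)] by metis
  qed
  have second: "map (\<lambda>_. 1) t \<in> rel Y r \<longleftrightarrow> t \<in> rel U r" if "\<exists>e. is_emb U Y e \<and> e 0 = 1" "set t \<subseteq> {0}"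
    for Y :: "'a lstr" and r t
    using that is_emb_point_rel_iff[OF _ dom(4)] by metis
  show ?thesis
    by unfold_locales (use dom first[OF B(1)] first[OF B(2)] second[OF U(1)] second[OF U(2)] in auto)
qed

theorem theorem6p2:
  fixes ar :: "'r \<Rightarrow> nat"
    and F :: "'r lstr set"
    and H B U :: "'r lstr"
    and C :: "nat \<Rightarrow> 'r lstr"
  assumes F: "\<forall>X\<in>F. wf_str ar X \<and> finite (dom X) \<and> irreducible_str X"
    and H: "wf_str ar H" "dom H = UNIV" "F_free F H"
    and univ: "\<forall>A. wf_str ar A \<and> F_free F A \<longrightarrow> embeds A H"
    and B: "wf_str ar B" "dom B = {..<1}" "F_free F B"
    and U: "wf_str ar U" "dom U = {..<1}" "F_free F U"
    and C: "\<forall>i. wf_str ar (C i) \<and> dom (C i) = {..<2} \<and> F_free F (C i)"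
    and C_noniso: "\<forall>i j. i \<noteq> j \<longrightarrow> \<not> iso (C i) (C j)"
    and C_B: "\<forall>i. \<exists>e. is_emb B (C i) e \<and> e 0 = 0"
    and C_U: "\<forall>i. \<exists>e. is_emb U (C i) e \<and> e 0 = 1"
  shows "\<exists>A. wf_str ar A \<and> dom A = {..<3} \<and> F_free F A \<and>
           (\<exists>c :: (nat \<Rightarrow> nat) \<Rightarrow> nat. \<forall>f. tree_like H f \<longrightarrow>
              (\<forall>k. \<exists>e\<in>Emb A H. e ` dom A \<subseteq> range f \<and> c e = k))"
proof -
  have C_dom: "\<And>i. dom (C i) = {..<2}" using C by blast
  have C_distinct: "\<And>i j. i \<noteq> j \<Longrightarrow> \<not> iso (C i) (C j)" using C_noniso by blast
  interpret compat: amalg_compatible "C k" "C (Suc k)" U for k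
    by (rule amalg_compatible_pointed) (use C_dom B(2) U(2) C_B C_U in auto)
  have F_irreducible: "\<forall>X\<in>F. wf_str ar X \<and> irreducible_str X" using F by blast
  have D: "wf_str ar (amalg (C k) (C (Suc k)) U)" "F_free F (amalg (C k) (C (Suc k)) U)" for k
    using wf_str_amalg[of ar] compat.F_free_amalg[OF F_irreducible] C U by auto
  have A: "wf_str ar (indep_copies U 3)" "dom (indep_copies U 3) = {..<3}" "F_free F (indep_copies U 3)"
    using wf_str_indep_copies[OF U(1)] F_free_is_emb[OF D(2) compat.is_emb_indep_copies_amalg]
    by (simp_all add: indep_copies_def)
  have "\<exists>e\<in>Emb (indep_copies U 3) H. e ` dom (indep_copies U 3) \<subseteq> range f \<and> pair_colour H C e = k"
    if f: "tree_like H f" for f k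
  proof -
    obtain d where d: "is_emb (amalg (C k) (C (Suc k)) U) H d"
      using univ D unfolding embeds_def by blast
    note points = compat.is_emb_amalg_points[OF d]
    show ?thesis
      by (rule tree_like_attains_pair_colour[OF f H(2) A(2) C_dom C_distinct points])
  qed
  then show ?thesis using A by blast
qed

end
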